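(* Let $\mathbf{F}_q$ have characteristic $p$, $q>2$, let $1\le k\le q-2$ with $\langle k\rangle_p=p-1$, and let $b\in\mathbf{F}_p$. Then $$N(k,b,\mathbf{F}_q\setminus\{0,1\})=\frac1q\binom{q-2}{k}+(-1)^{k+\lfloor k/p\rfloor}\frac{q-p}{q}\binom{q/p-2}{\lfloor k/p\rfloor}.$$
   Context: $N(k,b,D)$ denotes the number of $k$-element subsets $\{x_1,\dots,x_k\}\subseteq D$ with $x_1+\dots+x_k=b$. $\langle k\rangle_p$ is the least non-negative residue of $k$ modulo $p$. Binomial coefficients $\binom{x}{m}=x(x-1)\cdots(x-m+1)/m!$ for real $x$, integer $m\ge0$. *)

theory Defs
  imports Complex_Main
begin

definition N_subsets :: "nat \<Rightarrow> 'a::comm_monoid_add \<Rightarrow> 'a set \<Rightarrow> nat" where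
  "N_subsets k b D = card {S. S \<subseteq> D \<and> card S = k \<and> finite S \<and> (\<Sum>x\<in>S. x) = b}"

end

theory Submission
  imports Defs "HOL-Number_Theory.Cong"
begin

text \<open>
  Let \<open>F\<close> be a finite field with \<open>q\<close> elements and characteristic \<open>p\<close>, \<open>F\<^sub>p\<close> its prime
  subfield, and \<open>A(X, j)\<close> the number of \<open>j\<close>-subsets of \<open>X\<close> whose sum lies in \<open>F\<^sub>p\<close>.

  If \<open>k \<equiv> -1 (mod p)\<close>, translating the part of a set outside \<open>F\<^sub>p\<close>
  permutes the \<open>k\<close>-subsets of \<open>D = F \<setminus> {0,1}\<close> and moves their sums through all of
  \<open>F\<^sub>p\<close> evenly, so \<open>A(D, k) = p N(k, b, D)\<close> for every \<open>b \<in> F\<^sub>p\<close>.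

  Counting \<open>j\<close>-subsets of \<open>F\<close> by their sum, scaling shows that all
  nonzero sums are equally frequent; translating (if \<open>p \<nmid> j\<close>) or shifting inside a coset
  of \<open>F\<^sub>p\<close> that the set meets only partially (if \<open>p | j\<close>) shows that the sums \<open>0\<close>
  and \<open>1\<close> differ only through unions of cosets, of which there are \<open>binom(q/p, j/p)\<close>.
  This gives a closed form \<open>(p/q) binom(q,j) + ((q-p)/q) E(j)\<close> for \<open>A(F, j)\<close>.

  (3) Deleting \<open>0\<close> and \<open>1\<close>.  \<open>A\<close> satisfies Pascal's rule when a point of \<open>F\<^sub>p\<close> is
  removed, so the closed form propagates to \<open>A(F \<setminus> {0}, j)\<close> and \<open>A(F \<setminus> {0,1}, j)\<close> with
  explicit error terms; at \<open>j = k\<close> the latter collapses by an alternating binomial sum.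
\<close>

definition Fp :: "'a::{field,finite} set" where
  "Fp = range of_nat"

lemma CHAR_gt_1: "CHAR('a::{field,finite}) > 1"
proof -
  have "CHAR('a) > 0" by (rule finite_imp_CHAR_pos) simp
  moreover have "CHAR('a) \<noteq> Suc 0" by simp
  ultimately show ?thesis by linarith
qed

lemma CHAR_odd: "CHAR('a::{field,finite}) \<noteq> 2 \<Longrightarrow> odd CHAR('a)"
  using CHAR_gt_1[where 'a='a] prime_CHAR_semidom[where 'a='a] prime_odd_nat prime_ge_2_nat
  by (metis le_neq_implies_less less_trans zero_less_one)

lemma of_nat_eq_iff_mod_CHAR:
  "(of_nat a :: 'a::{field,finite}) = of_nat b \<longleftrightarrow> a mod CHAR('a) = b mod CHAR('a)"
  by (simp add: of_nat_eq_iff_cong_CHAR cong_def)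

lemma Fp_eq_image: "(Fp :: 'a::{field,finite} set) = of_nat ` {..<CHAR('a)}"
proof -
  have "(of_nat n :: 'a) \<in> of_nat ` {..<CHAR('a)}" for n
  proof -
    have "(of_nat n :: 'a) = of_nat (n mod CHAR('a))" by (simp add: of_nat_eq_iff_mod_CHAR)
    moreover have "n mod CHAR('a) < CHAR('a)" using CHAR_gt_1[where 'a='a] by simp
    ultimately show ?thesis by blast
  qed
  then show ?thesis unfolding Fp_def by auto
qed

lemma card_Fp: "card (Fp :: 'a::{field,finite} set) = CHAR('a)"
proof -
  have "inj_on (of_nat :: nat \<Rightarrow> 'a) {..<CHAR('a)}"
    by (auto simp: inj_on_def of_nat_eq_iff_mod_CHAR)
  then show ?thesis by (simp add: Fp_eq_image card_image)
qed

lemma Fp_of_nat [simp]: "of_nat n \<in> (Fp :: 'a::{field,finite} set)"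
  unfolding Fp_def by simp

lemma Fp_0 [simp]: "0 \<in> (Fp :: 'a::{field,finite} set)"
  using Fp_of_nat[of 0] by simp

lemma Fp_1 [simp]: "1 \<in> (Fp :: 'a::{field,finite} set)"
  using Fp_of_nat[of 1] by simp

lemma Fp_add: "x \<in> Fp \<Longrightarrow> y \<in> Fp \<Longrightarrow> x + y \<in> (Fp :: 'a::{field,finite} set)"
  unfolding Fp_def by (auto simp flip: of_nat_add)

lemma Fp_mult: "x \<in> Fp \<Longrightarrow> y \<in> Fp \<Longrightarrow> x * y \<in> (Fp :: 'a::{field,finite} set)"
  unfolding Fp_def by (auto simp flip: of_nat_mult)

text \<open>Since \<open>F\<^sub>p\<close> is finite, injective self-maps given by translation and by
  nonzero scaling are onto; this yields closure under subtraction and division.\<close>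
lemma Fp_translate_onto: "x \<in> Fp \<Longrightarrow> (\<lambda>t. x + t) ` Fp = (Fp :: 'a::{field,finite} set)"
  by (rule endo_inj_surj) (auto simp: Fp_add inj_on_def)

lemma Fp_scale_onto: "w \<in> Fp \<Longrightarrow> w \<noteq> 0 \<Longrightarrow> (\<lambda>t. w * t) ` Fp = (Fp :: 'a::{field,finite} set)"
  by (rule endo_inj_surj) (auto simp: Fp_mult inj_on_def)

lemma Fp_uminus:
  assumes "x \<in> Fp" shows "- x \<in> (Fp :: 'a::{field,finite} set)"
proof -
  obtain t where "t \<in> Fp" "x + t = 0"
    using Fp_translate_onto[OF assms] Fp_0 by (metis imageE)
  then show ?thesis by (metis add.commute add_eq_0_iff2)
qed

lemma Fp_diff: "x \<in> Fp \<Longrightarrow> y \<in> Fp \<Longrightarrow> x - y \<in> (Fp :: 'a::{field,finite} set)"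
  using Fp_add Fp_uminus by (metis diff_conv_add_uminus)

lemma Fp_divide:
  assumes "x \<in> Fp" "w \<in> Fp" "w \<noteq> 0" shows "x / w \<in> (Fp :: 'a::{field,finite} set)"
proof -
  obtain t where "t \<in> Fp" "w * t = x"
    using Fp_scale_onto[OF assms(2,3)] assms(1) by (metis imageE)
  then show ?thesis using assms(3) by (metis nonzero_mult_div_cancel_left)
qed

lemma card_fibres_sum:
  fixes f :: "'b \<Rightarrow> 'c"
  assumes "finite F" "finite B"
  shows "card {x\<in>F. f x \<in> B} = (\<Sum>b\<in>B. card {x\<in>F. f x = b})"
proof -
  have "{x\<in>F. f x \<in> B} = (\<Union>b\<in>B. {x\<in>F. f x = b})" by auto
  moreover have "card (\<Union>b\<in>B. {x\<in>F. f x = b}) = (\<Sum>b\<in>B. card {x\<in>F. f x = b})"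
    by (rule card_UN_disjoint) (use assms in auto)
  ultimately show ?thesis by simp
qed

lemma card_sum_fibre_shift:
  fixes Fam :: "'a::{field,finite} set set" and \<tau> :: "'a \<Rightarrow> 'a set \<Rightarrow> 'a set"
    and w :: "'a set \<Rightarrow> 'a"
  assumes closed: "\<And>S t. S \<in> Fam \<Longrightarrow> t \<in> Fp \<Longrightarrow> \<tau> t S \<in> Fam"
    and act_0: "\<And>S. S \<in> Fam \<Longrightarrow> \<tau> 0 S = S"
    and act_add: "\<And>S t u. S \<in> Fam \<Longrightarrow> t \<in> Fp \<Longrightarrow> u \<in> Fp \<Longrightarrow> \<tau> u (\<tau> t S) = \<tau> (u + t) S"
    and w_inv: "\<And>S t. S \<in> Fam \<Longrightarrow> t \<in> Fp \<Longrightarrow> w (\<tau> t S) = w S"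
    and w_Fp: "\<And>S. S \<in> Fam \<Longrightarrow> w S \<in> Fp"
    and w_nz: "\<And>S. S \<in> Fam \<Longrightarrow> w S \<noteq> 0"
    and sum_act: "\<And>S t. S \<in> Fam \<Longrightarrow> t \<in> Fp \<Longrightarrow> (\<Sum>x\<in>\<tau> t S. x) = (\<Sum>x\<in>S. x) + w S * t"
    and d: "d \<in> Fp"
  shows "card {S\<in>Fam. (\<Sum>x\<in>S. x) = \<sigma>} = card {S\<in>Fam. (\<Sum>x\<in>S. x) = \<sigma> + d}"
proof -
  define move where "move e S = \<tau> (e / w S) S" for e S
  have step: "e / w S \<in> Fp" if "S \<in> Fam" "e \<in> Fp" for S e
    using Fp_divide[OF that(2) w_Fp[OF that(1)] w_nz[OF that(1)]] .
  have move: "move e S \<in> Fam \<and> (\<Sum>x\<in>move e S. x) = (\<Sum>x\<in>S. x) + e"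
    if "S \<in> Fam" "e \<in> Fp" for S e
    using closed[OF that(1) step[OF that]] sum_act[OF that(1) step[OF that]] w_nz[OF that(1)]
    by (simp add: move_def)
  have move_back: "move (- e) (move e S) = S" if "S \<in> Fam" "e \<in> Fp" for S e
  proof -
    have "move (- e) (move e S) = \<tau> (- e / w S) (\<tau> (e / w S) S)"
      using w_inv[OF that(1) step[OF that]] by (simp add: move_def)
    also have "\<dots> = S"
      using act_add[OF that(1) step[OF that] step[OF that(1) Fp_uminus[OF that(2)]]] act_0[OF that(1)]
      by simp
    finally show ?thesis .
  qed
  have "bij_betw (move d) {S\<in>Fam. (\<Sum>x\<in>S. x) = \<sigma>} {S\<in>Fam. (\<Sum>x\<in>S. x) = \<sigma> + d}"
  proof (rule bij_betw_byWitness[where f' = "move (- d)"])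
    show "\<forall>S\<in>{S\<in>Fam. (\<Sum>x\<in>S. x) = \<sigma>}. move (- d) (move d S) = S"
      using move_back d by blast
    show "\<forall>S\<in>{S\<in>Fam. (\<Sum>x\<in>S. x) = \<sigma> + d}. move d (move (- d) S) = S"
      using move_back[of _ "- d"] Fp_uminus[OF d] by force
    show "move d ` {S\<in>Fam. (\<Sum>x\<in>S. x) = \<sigma>} \<subseteq> {S\<in>Fam. (\<Sum>x\<in>S. x) = \<sigma> + d}"
      using move d by auto
    show "move (- d) ` {S\<in>Fam. (\<Sum>x\<in>S. x) = \<sigma> + d} \<subseteq> {S\<in>Fam. (\<Sum>x\<in>S. x) = \<sigma>}"
      using move[of _ "- d"] Fp_uminus[OF d] by auto
  qed
  then show ?thesis by (rule bij_betw_same_card)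
qed

definition shift_within :: "'a set \<Rightarrow> 'a::{field,finite} \<Rightarrow> 'a set \<Rightarrow> 'a set" where
  "shift_within c t S = (S - c) \<union> (\<lambda>x. t + x) ` (S \<inter> c)"

locale Fp_stable =
  fixes c :: "'a::{field,finite} set"
  assumes stable: "\<And>t x. t \<in> Fp \<Longrightarrow> x \<in> c \<Longrightarrow> t + x \<in> c"
begin

lemma shift_within_inter: "t \<in> Fp \<Longrightarrow> shift_within c t S \<inter> c = (\<lambda>x. t + x) ` (S \<inter> c)"
  unfolding shift_within_def using stable by auto

lemma shift_within_diff: "t \<in> Fp \<Longrightarrow> shift_within c t S - c = S - c"
  unfolding shift_within_def using stable by auto

lemma card_shift_within_inter: "t \<in> Fp \<Longrightarrow> card (shift_within c t S \<inter> c) = card (S \<inter> c)"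
  by (simp add: shift_within_inter card_image inj_on_def)

lemma card_shift_within: "t \<in> Fp \<Longrightarrow> card (shift_within c t S) = card S"
  using card_shift_within_inter[of t S] shift_within_diff[of t S]
  by (metis card_Int_Diff finite)

lemma shift_within_0: "shift_within c 0 S = S"
  unfolding shift_within_def by auto

lemma shift_within_add:
  "t \<in> Fp \<Longrightarrow> u \<in> Fp \<Longrightarrow> shift_within c u (shift_within c t S) = shift_within c (u + t) S"
  using shift_within_inter[of t S] shift_within_diff[of t S]
  unfolding shift_within_def[of c u "shift_within c t S"]
  by (auto simp: shift_within_def image_image add.assoc)

lemma sum_shift_within:
  assumes t: "t \<in> Fp"
  shows "(\<Sum>x\<in>shift_within c t S. x) = (\<Sum>x\<in>S. x) + of_nat (card (S \<inter> c)) * t"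
proof -
  have "(\<Sum>x\<in>shift_within c t S. x) = (\<Sum>x\<in>S - c. x) + (\<Sum>x\<in>(\<lambda>x. t + x) ` (S \<inter> c). x)"
    unfolding shift_within_def by (rule sum.union_disjoint) (use stable t in auto)
  also have "(\<Sum>x\<in>(\<lambda>x. t + x) ` (S \<inter> c). x) = (\<Sum>x\<in>S \<inter> c. t + x)"
    by (subst sum.reindex) (auto simp: inj_on_def)
  also have "\<dots> = of_nat (card (S \<inter> c)) * t + (\<Sum>x\<in>S \<inter> c. x)"
    by (simp add: sum.distrib)
  also have "(\<Sum>x\<in>S - c. x) + (of_nat (card (S \<inter> c)) * t + (\<Sum>x\<in>S \<inter> c. x))
      = (\<Sum>x\<in>S. x) + of_nat (card (S \<inter> c)) * t"
    by (simp add: algebra_simps sum.Int_Diff[of S _ c, simplified])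
  finally show ?thesis .
qed

end

definition count_Fp_sum :: "'a::{field,finite} set \<Rightarrow> nat \<Rightarrow> nat" where
  "count_Fp_sum X j = card {S. S \<subseteq> X \<and> card S = j \<and> (\<Sum>x\<in>S. x) \<in> Fp}"

lemma count_Fp_sum_0: "count_Fp_sum X 0 = 1"
proof -
  have "{S. S \<subseteq> X \<and> card S = 0 \<and> (\<Sum>x\<in>S. x) \<in> Fp} = {{}}" by auto
  then show ?thesis unfolding count_Fp_sum_def by simp
qed

text \<open>Pascal-type recursion: removing a point \<open>a \<in> F\<^sub>p\<close> from \<open>X\<close> splits the
  \<open>(j+1)\<close>-subsets according to whether they contain \<open>a\<close>; adding \<open>a\<close> keeps the sum in \<open>F\<^sub>p\<close>.\<close>
lemma count_Fp_sum_Suc: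
  fixes X :: "'a::{field,finite} set"
  assumes a: "a \<in> Fp" "a \<in> X"
  shows "count_Fp_sum X (Suc j) = count_Fp_sum (X - {a}) (Suc j) + count_Fp_sum (X - {a}) j"
proof -
  let ?L = "{S. S \<subseteq> X \<and> card S = Suc j \<and> (\<Sum>x\<in>S. x) \<in> Fp}"
  let ?B1 = "{S. S \<subseteq> X - {a} \<and> card S = Suc j \<and> (\<Sum>x\<in>S. x) \<in> Fp}"
  let ?B0 = "{S. S \<subseteq> X - {a} \<and> card S = j \<and> (\<Sum>x\<in>S. x) \<in> Fp}"
  have decomp: "?L = ?B1 \<union> insert a ` ?B0"
  proof (intro equalityI subsetI)
    fix S assume S: "S \<in> ?L"
    show "S \<in> ?B1 \<union> insert a ` ?B0"
    proof (cases "a \<in> S")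
      case True
      have "(\<Sum>x\<in>S - {a}. x) = (\<Sum>x\<in>S. x) - a"
        using True by (simp add: sum_diff1)
      then have "S - {a} \<in> ?B0" using S True Fp_diff a(1) by auto
      moreover have "S = insert a (S - {a})" using True by auto
      ultimately show ?thesis by blast
    next
      case False
      then show ?thesis using S by auto
    qed
  next
    fix S assume "S \<in> ?B1 \<union> insert a ` ?B0"
    then show "S \<in> ?L"
    proof
      assume "S \<in> insert a ` ?B0"
      then obtain T where T: "T \<in> ?B0" "S = insert a T" by auto
      then have "a \<notin> T" "finite T" by auto
      then have "card S = Suc j" "(\<Sum>x\<in>S. x) = a + (\<Sum>x\<in>T. x)" using T by auto
      then show ?thesis using T a Fp_add by auto
    qed auto
  qed
  have "card ?L = card ?B1 + card (insert a ` ?B0)"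
    unfolding decomp by (rule card_Un_disjoint) auto
  also have "card (insert a ` ?B0) = card ?B0"
    by (rule card_image) (auto simp: inj_on_def)
  finally show ?thesis unfolding count_Fp_sum_def .
qed

text \<open>If \<open>S\<close> avoids \<open>Z \<subseteq> F\<^sub>p\<close> then \<open>|S \<inter> F\<^sub>p| \<le> p - |Z|\<close>; so when \<open>|S| mod p\<close> exceeds
  \<open>p - |Z|\<close>, the part of \<open>S\<close> outside \<open>F\<^sub>p\<close> cannot have size divisible by \<open>p\<close>.\<close>
lemma CHAR_not_dvd_card_outside_Fp:
  fixes S Z :: "'a::{field,finite} set"
  assumes Z: "Z \<subseteq> Fp" and S: "S \<inter> Z = {}" and k: "CHAR('a) - card Z < card S mod CHAR('a)"
  shows "\<not> CHAR('a) dvd card (S - Fp)"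
proof
  let ?p = "CHAR('a)"
  assume "?p dvd card (S - Fp)"
  then obtain r where r: "card (S - Fp) = ?p * r" ..
  have "S \<inter> Fp \<subseteq> Fp - Z" using S by auto
  then have "card (S \<inter> Fp) \<le> card (Fp - Z)" by (meson card_mono finite)
  also have "\<dots> = ?p - card Z" using Z by (simp add: card_Diff_subset card_Fp)
  finally have small: "card (S \<inter> Fp) \<le> ?p - card Z" .
  have "card S mod ?p = card (S \<inter> Fp) mod ?p"
    using card_Int_Diff[of S Fp] r by simp
  also have "\<dots> = card (S \<inter> Fp)"
    using small k mod_less_divisor[of ?p "card S"] CHAR_gt_1[where 'a='a] by (intro mod_less) linarith
  finally show False using k small by linarith
qed

text \<open>The key reduction, for \<open>D = F \<setminus> Z\<close> with \<open>Z \<subseteq> F\<^sub>p\<close>: shifting the part of \<open>S\<close>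
  outside \<open>F\<^sub>p\<close> changes the sum by \<open>|S \<setminus> F\<^sub>p| * t\<close>, a nonzero multiple of \<open>t\<close>, so all
  sums in \<open>F\<^sub>p\<close> are equally frequent among the \<open>k\<close>-subsets of \<open>D\<close>.\<close>
lemma count_Fp_sum_eq_CHAR_mult_N:
  fixes b :: "'a::{field,finite}" and Z :: "'a set"
  assumes Z: "Z \<subseteq> Fp" and k: "CHAR('a) - card Z < k mod CHAR('a)" and b: "b \<in> Fp"
  shows "count_Fp_sum (UNIV - Z) k = CHAR('a) * N_subsets k b (UNIV - Z)"
proof -
  define c :: "'a set" where "c = UNIV - Fp"
  interpret Fp_stable c
  proof
    fix t x :: 'a assume "t \<in> Fp" "x \<in> c"
    then show "t + x \<in> c" unfolding c_def using Fp_diff[of "t + x" t] by auto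
  qed
  define Fam where "Fam = {S. S \<subseteq> UNIV - Z \<and> card S = k}"
  define w where "w S = (of_nat (card (S \<inter> c)) :: 'a)" for S
  have w_nz: "w S \<noteq> 0" if "S \<in> Fam" for S
    using CHAR_not_dvd_card_outside_Fp[OF Z, of S] k that
    unfolding w_def Fam_def c_def by (auto simp: of_nat_eq_0_iff_char_dvd Diff_eq)
  have shift_inv: "card {S\<in>Fam. (\<Sum>x\<in>S. x) = b} = card {S\<in>Fam. (\<Sum>x\<in>S. x) = b + d}"
    if d: "d \<in> Fp" for d
  proof (rule card_sum_fibre_shift[where \<tau> = "shift_within c" and w = w])
    fix S and t :: 'a assume S: "S \<in> Fam" and t: "t \<in> Fp"
    have "shift_within c t S \<subseteq> UNIV - Z"
      using S stable[OF t] Z unfolding Fam_def shift_within_def c_def by auto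
    then show "shift_within c t S \<in> Fam"
      using S card_shift_within[OF t] unfolding Fam_def by auto
    show "w (shift_within c t S) = w S"
      unfolding w_def using card_shift_within_inter[OF t] by simp
    show "(\<Sum>x\<in>shift_within c t S. x) = (\<Sum>x\<in>S. x) + w S * t"
      unfolding w_def by (rule sum_shift_within[OF t])
  qed (use w_nz d in \<open>auto simp: shift_within_0 shift_within_add w_def\<close>)
  have "count_Fp_sum (UNIV - Z) k = card {S\<in>Fam. (\<Sum>x\<in>S. x) \<in> Fp}"
    unfolding count_Fp_sum_def Fam_def by (rule arg_cong[where f = card]) auto
  also have "\<dots> = (\<Sum>h\<in>Fp. card {S\<in>Fam. (\<Sum>x\<in>S. x) = h})"
    by (rule card_fibres_sum) auto
  also have "\<dots> = (\<Sum>h\<in>(Fp :: 'a set). card {S\<in>Fam. (\<Sum>x\<in>S. x) = b})"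
  proof (rule sum.cong[OF refl])
    fix h :: 'a assume "h \<in> Fp"
    then show "card {S\<in>Fam. (\<Sum>x\<in>S. x) = h} = card {S\<in>Fam. (\<Sum>x\<in>S. x) = b}"
      using shift_inv[of "h - b"] Fp_diff[OF _ b] by simp
  qed
  also have "\<dots> = CHAR('a) * card {S\<in>Fam. (\<Sum>x\<in>S. x) = b}"
    by (simp add: card_Fp)
  also have "card {S\<in>Fam. (\<Sum>x\<in>S. x) = b} = N_subsets k b (UNIV - Z)"
    unfolding N_subsets_def Fam_def by (rule arg_cong[where f = card]) auto
  finally show ?thesis .
qed

definition count_sum :: "nat \<Rightarrow> 'a::{field,finite} \<Rightarrow> nat" where
  "count_sum j s = card {S. card S = j \<and> (\<Sum>x\<in>S. x) = s}"

lemma sum_count_sum_UNIV: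
  "(\<Sum>s\<in>UNIV. count_sum j (s::'a::{field,finite})) = card (UNIV::'a set) choose j"
proof -
  have "(\<Sum>s\<in>UNIV. count_sum j (s::'a)) = card {S\<in>{S::'a set. card S = j}. (\<Sum>x\<in>S. x) \<in> UNIV}"
    unfolding count_sum_def by (subst card_fibres_sum) auto
  also have "\<dots> = card {S. S \<subseteq> (UNIV::'a set) \<and> card S = j}" by simp
  also have "\<dots> = card (UNIV::'a set) choose j" by (rule n_subsets) simp
  finally show ?thesis .
qed

lemma count_Fp_sum_UNIV_eq_sum:
  "count_Fp_sum (UNIV::'a::{field,finite} set) j = (\<Sum>s\<in>Fp. count_sum j (s::'a))"
proof -
  have "count_Fp_sum (UNIV::'a set) j = card {S\<in>{S::'a set. card S = j}. (\<Sum>x\<in>S. x) \<in> Fp}"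
    unfolding count_Fp_sum_def by simp
  also have "\<dots> = (\<Sum>s\<in>Fp. count_sum j (s::'a))"
    unfolding count_sum_def by (subst card_fibres_sum) auto
  finally show ?thesis .
qed

lemma count_sum_eq_by_permutation:
  fixes f g :: "'a::{field,finite} \<Rightarrow> 'a"
  assumes gf: "\<And>x. g (f x) = x" and fg: "\<And>x. f (g x) = x"
    and sums: "\<And>S. card S = j \<Longrightarrow> (\<Sum>x\<in>f ` S. x) = s' \<longleftrightarrow> (\<Sum>x\<in>S. x) = s"
  shows "count_sum j s = count_sum j s'"
proof -
  have inj: "inj f" "inj g" by (metis gf injI, metis fg injI)
  have card_img: "card (f ` S) = card S" "card (g ` S) = card S" for S
    using card_image[OF inj_on_subset[OF inj(1) subset_UNIV]]
      card_image[OF inj_on_subset[OF inj(2) subset_UNIV]] by simp_all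
  have "bij_betw (\<lambda>S. f ` S) {S. card S = j \<and> (\<Sum>x\<in>S. x) = s} {S. card S = j \<and> (\<Sum>x\<in>S. x) = s'}"
  proof (rule bij_betw_byWitness[where f' = "\<lambda>S. g ` S"])
    show "\<forall>S\<in>{S. card S = j \<and> (\<Sum>x\<in>S. x) = s}. g ` f ` S = S"
      by (simp add: image_image gf)
    show "\<forall>S\<in>{S. card S = j \<and> (\<Sum>x\<in>S. x) = s'}. f ` g ` S = S"
      by (simp add: image_image fg)
    show "(\<lambda>S. f ` S) ` {S. card S = j \<and> (\<Sum>x\<in>S. x) = s} \<subseteq> {S. card S = j \<and> (\<Sum>x\<in>S. x) = s'}"
    proof
      fix T assume "T \<in> (\<lambda>S. f ` S) ` {S. card S = j \<and> (\<Sum>x\<in>S. x) = s}"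
      then obtain S where S: "card S = j" "(\<Sum>x\<in>S. x) = s" "T = f ` S" by auto
      then show "T \<in> {S. card S = j \<and> (\<Sum>x\<in>S. x) = s'}" using sums[of S] card_img by simp
    qed
    show "(\<lambda>S. g ` S) ` {S. card S = j \<and> (\<Sum>x\<in>S. x) = s'} \<subseteq> {S. card S = j \<and> (\<Sum>x\<in>S. x) = s}"
    proof
      fix T assume "T \<in> (\<lambda>S. g ` S) ` {S. card S = j \<and> (\<Sum>x\<in>S. x) = s'}"
      then obtain S where S: "card S = j" "(\<Sum>x\<in>S. x) = s'" "T = g ` S" by auto
      then have "f ` T = S" "card T = j" by (simp_all add: image_image fg card_img)
      then show "T \<in> {S. card S = j \<and> (\<Sum>x\<in>S. x) = s}" using sums[of T] S(2) by simp
    qed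
  qed
  then show ?thesis unfolding count_sum_def by (rule bij_betw_same_card)
qed

text \<open>Scaling by \<open>s'/s\<close> shows that all nonzero sums are equally frequent.\<close>
lemma count_sum_nonzero:
  fixes s :: "'a::{field,finite}"
  assumes "s \<noteq> 0"
  shows "count_sum j s = count_sum j (1::'a)"
proof (rule count_sum_eq_by_permutation[where f = "\<lambda>x. x / s" and g = "\<lambda>x. s * x"])
  fix S :: "'a set"
  have "(\<Sum>x\<in>(\<lambda>x. x / s) ` S. x) = (\<Sum>x\<in>S. x / s)"
    by (subst sum.reindex) (use assms in \<open>auto simp: inj_on_def\<close>)
  then show "(\<Sum>x\<in>(\<lambda>x. x / s) ` S. x) = 1 \<longleftrightarrow> (\<Sum>x\<in>S. x) = s"
    using assms by (simp add: sum_divide_distrib[symmetric])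
qed (use assms in auto)

text \<open>Translating by \<open>t\<close> adds \<open>j t\<close> to the sum; if \<open>p \<nmid> j\<close> this reaches every value.\<close>
lemma count_sum_translate:
  fixes s s' :: "'a::{field,finite}"
  assumes j: "\<not> CHAR('a) dvd j"
  shows "count_sum j s = count_sum j s'"
proof -
  define t where "t = (s' - s) / of_nat j"
  have jt: "of_nat j * t = s' - s"
    using j by (simp add: t_def of_nat_eq_0_iff_char_dvd)
  show ?thesis
  proof (rule count_sum_eq_by_permutation[where f = "\<lambda>x. x + t" and g = "\<lambda>x. x - t"])
    fix S :: "'a set" assume card_S: "card S = j"
    have "(\<Sum>x\<in>(\<lambda>x. x + t) ` S. x) = (\<Sum>x\<in>S. x + t)"
      by (subst sum.reindex) (auto simp: inj_on_def)
    also have "\<dots> = (\<Sum>x\<in>S. x) + (s' - s)"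
      by (simp add: sum.distrib card_S jt)
    finally show "(\<Sum>x\<in>(\<lambda>x. x + t) ` S. x) = s' \<longleftrightarrow> (\<Sum>x\<in>S. x) = s"
      by (auto simp: algebra_simps)
  qed auto
qed

lemma sum_count_sum_containing_0:
  fixes A :: "'a::{field,finite} set"
  assumes "0 \<in> A"
  shows "(\<Sum>s\<in>A. count_sum j s) = count_sum j (0::'a) + (card A - 1) * count_sum j (1::'a)"
proof -
  have "(\<Sum>s\<in>A. count_sum j s) = count_sum j (0::'a) + (\<Sum>s\<in>A - {0}. count_sum j s)"
    using assms by (simp add: sum.remove)
  also have "(\<Sum>s\<in>A - {0}. count_sum j s) = (\<Sum>s\<in>A - {0}. count_sum j (1::'a))"
    by (rule sum.cong) (auto intro: count_sum_nonzero)
  also have "\<dots> = (card A - 1) * count_sum j (1::'a)"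
    using assms by (simp add: card_Diff_singleton)
  finally show ?thesis .
qed

definition Fp_coset :: "'a::{field,finite} \<Rightarrow> 'a set" where
  "Fp_coset x = (\<lambda>t. x + t) ` Fp"

definition Fp_cosets :: "'a::{field,finite} set set" where
  "Fp_cosets = range Fp_coset"

lemma card_Fp_coset: "card (Fp_coset (x::'a::{field,finite})) = CHAR('a)"
  unfolding Fp_coset_def by (subst card_image) (auto simp: inj_on_def card_Fp)

lemma self_in_Fp_coset: "x \<in> Fp_coset x"
  unfolding Fp_coset_def by (metis Fp_0 add_0_right image_eqI)

lemma Fp_coset_stable: "t \<in> Fp \<Longrightarrow> x \<in> Fp_coset y \<Longrightarrow> t + x \<in> Fp_coset y"
  unfolding Fp_coset_def by (auto simp: image_iff intro!: bexI[of _ "t + _"] Fp_add)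

lemma Fp_coset_eq:
  assumes "y \<in> Fp_coset x" shows "Fp_coset y = Fp_coset x"
proof -
  obtain s where s: "s \<in> Fp" "y = x + s" using assms unfolding Fp_coset_def by auto
  have "(\<lambda>t. s + t) ` Fp = Fp" by (rule Fp_translate_onto[OF s(1)])
  then have "(\<lambda>t. x + t) ` ((\<lambda>t. s + t) ` Fp) = (\<lambda>t. x + t) ` Fp" by simp
  then show ?thesis unfolding Fp_coset_def s(2) by (simp add: image_image add.assoc)
qed

lemma Fp_cosets_disjoint:
  assumes "c \<in> Fp_cosets" "d \<in> Fp_cosets" "c \<noteq> d" shows "c \<inter> d = {}"
proof (rule ccontr)
  assume "c \<inter> d \<noteq> {}"
  then obtain z where "z \<in> c" "z \<in> d" by blast
  then have "Fp_coset z = c" "Fp_coset z = d"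
    using assms(1,2) Fp_coset_eq unfolding Fp_cosets_def by auto
  then show False using assms(3) by simp
qed

lemma Fp_coset_in_Fp_cosets: "Fp_coset x \<in> Fp_cosets"
  unfolding Fp_cosets_def by simp

lemma Fp_stable_coset: "c \<in> Fp_cosets \<Longrightarrow> Fp_stable c"
  unfolding Fp_cosets_def by unfold_locales (auto intro: Fp_coset_stable)

lemma card_Union_Fp_cosets:
  fixes C :: "'a::{field,finite} set set"
  assumes "C \<subseteq> Fp_cosets"
  shows "card (\<Union>C) = CHAR('a) * card C"
proof -
  have "CHAR('a) * card C = card (\<Union>C)"
  proof (rule card_partition)
    show "c \<in> C \<Longrightarrow> card c = CHAR('a)" for c
      using assms by (auto simp: Fp_cosets_def card_Fp_coset)
    show "c1 \<in> C \<Longrightarrow> c2 \<in> C \<Longrightarrow> c1 \<noteq> c2 \<Longrightarrow> c1 \<inter> c2 = {}" for c1 c2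
      using assms Fp_cosets_disjoint by blast
  qed auto
  then show ?thesis by simp
qed

lemma CHAR_mult_card_Fp_cosets:
  "CHAR('a) * card (Fp_cosets :: 'a::{field,finite} set set) = card (UNIV :: 'a set)"
proof -
  have "\<Union>(Fp_cosets :: 'a set set) = UNIV"
    unfolding Fp_cosets_def using self_in_Fp_coset by blast
  then show ?thesis using card_Union_Fp_cosets[of "Fp_cosets :: 'a set set"] by simp
qed

text \<open>Every coset has the same element sum as \<open>F\<^sub>p\<close>, namely \<open>p(p-1)/2\<close>, which is
  \<open>1\<close> in characteristic 2 and \<open>0\<close> otherwise.\<close>
lemma sum_Fp_coset: "(\<Sum>x\<in>Fp_coset y. x) = (\<Sum>x\<in>Fp. x :: 'a::{field,finite})"
proof -
  have "(\<Sum>x\<in>Fp_coset y. x) = (\<Sum>t\<in>Fp. y + t)"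
    unfolding Fp_coset_def by (subst sum.reindex) (auto simp: inj_on_def)
  then show ?thesis by (simp add: sum.distrib card_Fp)
qed

lemma sum_Fp: "(\<Sum>x\<in>Fp. x :: 'a::{field,finite}) = (if CHAR('a) = 2 then 1 else 0)"
proof -
  let ?p = "CHAR('a)"
  have "(\<Sum>x\<in>Fp. x :: 'a) = (\<Sum>i<?p. of_nat i)"
    unfolding Fp_eq_image by (subst sum.reindex) (auto simp: inj_on_def of_nat_eq_iff_mod_CHAR)
  also have "\<dots> = of_nat (?p * (?p - 1) div 2)"
    using Sum_Ico_nat[of 0 ?p] by (simp add: lessThan_atLeast0 flip: of_nat_sum)
  finally have sum_eq: "(\<Sum>x\<in>Fp. x :: 'a) = of_nat (?p * (?p - 1) div 2)" .
  show ?thesis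
  proof (cases "?p = 2")
    case False
    then obtain r where "?p = 2 * r + 1" using CHAR_odd oddE by blast
    then have "?p * (?p - 1) div 2 = ?p * r" by simp
    then show ?thesis using False sum_eq by simp
  qed (use sum_eq in simp)
qed

definition coset_closed :: "'a::{field,finite} set \<Rightarrow> bool" where
  "coset_closed S \<longleftrightarrow> (\<forall>x\<in>S. Fp_coset x \<subseteq> S)"

definition cosets_in :: "'a::{field,finite} set \<Rightarrow> 'a set set" where
  "cosets_in S = {c\<in>Fp_cosets. c \<subseteq> S}"

lemma coset_closed_Union: "coset_closed S \<Longrightarrow> \<Union>(cosets_in S) = S"
  unfolding coset_closed_def cosets_in_def Fp_cosets_def using self_in_Fp_coset by blast

lemma coset_closed_card:
  fixes S :: "'a::{field,finite} set"
  shows "coset_closed S \<Longrightarrow> card S = CHAR('a) * card (cosets_in S)"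
  using card_Union_Fp_cosets[of "cosets_in S"] coset_closed_Union[of S]
  by (simp add: cosets_in_def)

lemma cosets_in_Union: "C \<subseteq> Fp_cosets \<Longrightarrow> cosets_in (\<Union>C) = C"
proof (intro equalityI subsetI)
  fix c assume C: "C \<subseteq> Fp_cosets" and "c \<in> cosets_in (\<Union>C)"
  then have c: "c \<in> Fp_cosets" "c \<subseteq> \<Union>C" unfolding cosets_in_def by auto
  then obtain x where "x \<in> c" unfolding Fp_cosets_def using self_in_Fp_coset by blast
  then obtain d where "d \<in> C" "x \<in> d" using c by auto
  then show "c \<in> C" using Fp_cosets_disjoint[OF c(1)] C \<open>x \<in> c\<close> by blast
qed (auto simp: cosets_in_def)

lemma Union_coset_closed: "C \<subseteq> Fp_cosets \<Longrightarrow> coset_closed (\<Union>C)"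
  unfolding coset_closed_def Fp_cosets_def using Fp_coset_eq by blast

lemma card_coset_closed_sets:
  assumes "j = CHAR('a::{field,finite}) * m"
  shows "card {S::'a set. card S = j \<and> coset_closed S} = card (Fp_cosets :: 'a set set) choose m"
proof -
  have p: "CHAR('a) > 0" using CHAR_gt_1[where 'a='a] by simp
  have "bij_betw cosets_in {S::'a set. card S = j \<and> coset_closed S} {C. C \<subseteq> Fp_cosets \<and> card C = m}"
  proof (rule bij_betw_byWitness[where f' = Union])
    show "cosets_in ` {S::'a set. card S = j \<and> coset_closed S} \<subseteq> {C. C \<subseteq> Fp_cosets \<and> card C = m}"
      using coset_closed_card[where 'a='a] assms p by (auto simp: cosets_in_def)
    show "Union ` {C. C \<subseteq> Fp_cosets \<and> card C = m} \<subseteq> {S::'a set. card S = j \<and> coset_closed S}"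
      using card_Union_Fp_cosets Union_coset_closed assms by auto
  qed (use coset_closed_Union cosets_in_Union in auto)
  then have "card {S::'a set. card S = j \<and> coset_closed S} = card {C. C \<subseteq> (Fp_cosets :: 'a set set) \<and> card C = m}"
    by (rule bij_betw_same_card)
  also have "\<dots> = card (Fp_cosets :: 'a set set) choose m" by (rule n_subsets) simp
  finally show ?thesis .
qed

lemma sum_coset_closed:
  assumes "coset_closed S"
  shows "(\<Sum>x\<in>S. x) = of_nat (card (cosets_in S)) * (\<Sum>x\<in>Fp. x :: 'a::{field,finite})"
proof -
  have "(\<Sum>x\<in>S. x) = (\<Sum>x\<in>\<Union>(cosets_in S). x)"
    using coset_closed_Union[OF assms] by simp
  also have "\<dots> = (\<Sum>c\<in>cosets_in S. \<Sum>x\<in>c. x)"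
    by (subst sum.Union_disjoint) (auto simp: cosets_in_def dest: Fp_cosets_disjoint)
  also have "\<dots> = (\<Sum>c\<in>cosets_in S. \<Sum>x\<in>Fp. x)"
    by (rule sum.cong) (auto simp: cosets_in_def Fp_cosets_def sum_Fp_coset)
  finally show ?thesis by simp
qed

definition partial_cosets :: "'a::{field,finite} set \<Rightarrow> 'a set set" where
  "partial_cosets S = {c\<in>Fp_cosets. c \<inter> S \<noteq> {} \<and> \<not> c \<subseteq> S}"

lemma coset_closed_iff_no_partial: "coset_closed S \<longleftrightarrow> partial_cosets S = {}"
proof
  assume "coset_closed S"
  then show "partial_cosets S = {}"
    unfolding coset_closed_def partial_cosets_def Fp_cosets_def using Fp_coset_eq by blast
next
  assume "partial_cosets S = {}"
  then show "coset_closed S"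
    unfolding coset_closed_def partial_cosets_def
    using self_in_Fp_coset Fp_coset_in_Fp_cosets by blast
qed

lemma partial_cosets_shift_within:
  assumes c: "c \<in> partial_cosets S" and t: "t \<in> Fp"
  shows "partial_cosets (shift_within c t S) = partial_cosets S"
proof -
  have c_coset: "c \<in> Fp_cosets" using c unfolding partial_cosets_def by auto
  interpret Fp_stable c by (rule Fp_stable_coset[OF c_coset])
  have inter: "shift_within c t S \<inter> c = (\<lambda>x. t + x) ` (S \<inter> c)" by (rule shift_within_inter[OF t])
  have c_partial: "c \<inter> shift_within c t S \<noteq> {} \<and> \<not> c \<subseteq> shift_within c t S"
  proof
    show "c \<inter> shift_within c t S \<noteq> {}" using inter c unfolding partial_cosets_def by auto
    show "\<not> c \<subseteq> shift_within c t S"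
    proof
      assume "c \<subseteq> shift_within c t S"
      then have "shift_within c t S \<inter> c = c" by auto
      then have "card (S \<inter> c) = card c" using card_shift_within_inter[OF t, of S] by simp
      then have "S \<inter> c = c" by (metis Int_lower2 card_subset_eq finite)
      then show False using c unfolding partial_cosets_def by auto
    qed
  qed
  have other: "d \<inter> shift_within c t S = d \<inter> S" if "d \<in> Fp_cosets" "d \<noteq> c" for d
    using Fp_cosets_disjoint[OF that(1) c_coset that(2)] shift_within_diff[OF t, of S] by blast
  show ?thesis
    using c c_partial other by (auto simp: partial_cosets_def)
qed

text \<open>A partial coset meets \<open>S\<close> in strictly between \<open>0\<close> and \<open>p\<close> points, so this
  number is nonzero in the field.\<close>
lemma partial_coset_weight_nonzero:
  fixes S :: "'a::{field,finite} set"
  assumes "c \<in> partial_cosets S"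
  shows "(of_nat (card (S \<inter> c)) :: 'a) \<noteq> 0"
proof -
  have partial: "c \<in> Fp_cosets" "c \<inter> S \<noteq> {}" "\<not> c \<subseteq> S"
    using assms unfolding partial_cosets_def by auto
  have "0 < card (S \<inter> c)" using partial(2) by (simp add: Int_commute card_gt_0_iff)
  moreover have "S \<inter> c \<subset> c" using partial(3) by auto
  then have "card (S \<inter> c) < card c" by (rule psubset_card_mono[OF finite])
  moreover have "card c = CHAR('a)"
    using partial(1) card_Fp_coset[where 'a='a] unfolding Fp_cosets_def by auto
  ultimately show ?thesis by (auto simp: of_nat_eq_0_iff_char_dvd dest: nat_dvd_not_less)
qed

text \<open>A canonical choice of partial coset; it is unchanged by shifting inside it.\<close>
definition some_partial_coset :: "'a::{field,finite} set \<Rightarrow> 'a set" where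
  "some_partial_coset S = (SOME c. c \<in> partial_cosets S)"

lemma some_partial_coset: "\<not> coset_closed S \<Longrightarrow> some_partial_coset S \<in> partial_cosets S"
  unfolding some_partial_coset_def using coset_closed_iff_no_partial by (metis ex_in_conv someI_ex)

text \<open>Among sets that are not coset-closed, every \<open>F\<^sub>p\<close>-translate of a sum is equally
  frequent: shift the chosen partial coset \<open>c\<close>; the weight \<open>|S \<inter> c|\<close> lies strictly
  between \<open>0\<close> and \<open>p\<close>, hence is nonzero in the field.\<close>
lemma card_not_coset_closed_shift:
  fixes d :: "'a::{field,finite}"
  assumes d: "d \<in> Fp"
  shows "card {S\<in>{S. card S = j \<and> \<not> coset_closed S}. (\<Sum>x\<in>S. x) = \<sigma>}
       = card {S\<in>{S. card S = j \<and> \<not> coset_closed S}. (\<Sum>x\<in>S. x) = \<sigma> + d}"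
proof -
  define Fam where "Fam = {S::'a set. card S = j \<and> \<not> coset_closed S}"
  define c where "c S = some_partial_coset S" for S :: "'a set"
  define \<tau> where "\<tau> t S = shift_within (c S) t S" for t :: 'a and S
  define w where "w S = (of_nat (card (S \<inter> c S)) :: 'a)" for S
  have c_partial: "c S \<in> partial_cosets S" if "S \<in> Fam" for S
    using some_partial_coset that unfolding Fam_def c_def by auto
  then have stable: "Fp_stable (c S)" if "S \<in> Fam" for S
    using Fp_stable_coset that unfolding partial_cosets_def by auto
  have partial_\<tau>: "partial_cosets (\<tau> t S) = partial_cosets S" if "S \<in> Fam" "t \<in> Fp" for S t
    unfolding \<tau>_def by (rule partial_cosets_shift_within[OF c_partial[OF that(1)] that(2)])
  have c_\<tau>: "c (\<tau> t S) = c S" if "S \<in> Fam" "t \<in> Fp" for S t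
    unfolding c_def some_partial_coset_def using partial_\<tau>[OF that] by simp
  have "card {S\<in>Fam. (\<Sum>x\<in>S. x) = \<sigma>} = card {S\<in>Fam. (\<Sum>x\<in>S. x) = \<sigma> + d}"
  proof (rule card_sum_fibre_shift[where \<tau> = \<tau> and w = w])
    fix S and t :: 'a assume S: "S \<in> Fam" and t: "t \<in> Fp"
    interpret Fp_stable "c S" by (rule stable[OF S])
    have "\<not> coset_closed (\<tau> t S)"
      using S partial_\<tau>[OF S t] unfolding Fam_def coset_closed_iff_no_partial by simp
    then show "\<tau> t S \<in> Fam" using S card_shift_within[OF t] unfolding Fam_def \<tau>_def by simp
    show "w (\<tau> t S) = w S"
      unfolding w_def c_\<tau>[OF S t] unfolding \<tau>_def using card_shift_within_inter[OF t] by simp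
    show "(\<Sum>x\<in>\<tau> t S. x) = (\<Sum>x\<in>S. x) + w S * t"
      unfolding w_def \<tau>_def by (rule sum_shift_within[OF t])
  next
    fix S and t u :: 'a assume S: "S \<in> Fam" and t: "t \<in> Fp" and u: "u \<in> Fp"
    interpret Fp_stable "c S" by (rule stable[OF S])
    show "\<tau> u (\<tau> t S) = \<tau> (u + t) S"
      unfolding \<tau>_def[of u] c_\<tau>[OF S t] unfolding \<tau>_def by (rule shift_within_add[OF t u])
  next
    fix S assume S: "S \<in> Fam"
    interpret Fp_stable "c S" by (rule stable[OF S])
    show "\<tau> 0 S = S" unfolding \<tau>_def by (rule shift_within_0)
    show "w S \<in> Fp" unfolding w_def by simp
    show "w S \<noteq> 0" unfolding w_def by (rule partial_coset_weight_nonzero[OF c_partial[OF S]])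
  qed (rule d)
  then show ?thesis unfolding Fam_def .
qed

lemma card_coset_closed_with_sum:
  fixes \<sigma> :: "'a::{field,finite}"
  assumes j: "j = CHAR('a) * m"
  shows "card {S. card S = j \<and> coset_closed S \<and> (\<Sum>x\<in>S. x) = \<sigma>}
       = (if \<sigma> = of_nat m * (\<Sum>x\<in>Fp. x) then card (Fp_cosets :: 'a set set) choose m else 0)"
proof -
  have sum_S: "(\<Sum>x\<in>S. x) = of_nat m * (\<Sum>x\<in>Fp. x)" if "card S = j" "coset_closed S" for S :: "'a set"
  proof -
    have "card (cosets_in S) = m"
      using coset_closed_card[OF that(2)] that(1) j CHAR_gt_1[where 'a='a] by simp
    then show ?thesis using sum_coset_closed[OF that(2)] by simp
  qed
  show ?thesis
  proof (cases "\<sigma> = of_nat m * (\<Sum>x\<in>Fp. x)")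
    case True
    then have "{S. card S = j \<and> coset_closed S \<and> (\<Sum>x\<in>S. x) = \<sigma>} = {S::'a set. card S = j \<and> coset_closed S}"
      using sum_S by auto
    then show ?thesis using True card_coset_closed_sets[OF j] by simp
  next
    case False
    then have "{S. card S = j \<and> coset_closed S \<and> (\<Sum>x\<in>S. x) = \<sigma>} = {}" using sum_S by auto
    then show ?thesis using False by simp
  qed
qed

text \<open>The sign with which the coset-closed sets distinguish the sums \<open>0\<close> and \<open>1\<close>.\<close>
lemma coset_closed_sign:
  "(if (0::'a::{field,finite}) = of_nat m * (\<Sum>x\<in>Fp. x) then 1 else 0)
     - (if (1::'a) = of_nat m * (\<Sum>x\<in>Fp. x) then 1 else 0)
   = (-1::real) ^ (CHAR('a) * m + m)"
proof (cases "CHAR('a) = 2")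
  case True
  have "(of_nat m :: 'a) = 0 \<longleftrightarrow> even m" using True by (simp add: of_nat_eq_0_iff_char_dvd)
  moreover have "(of_nat m :: 'a) = 1 \<longleftrightarrow> odd m"
    using True of_nat_eq_iff_mod_CHAR[of m 1, where 'a='a] by (simp add: odd_iff_mod_2_eq_one)
  ultimately show ?thesis using True by (auto simp: sum_Fp power_add power_mult)
next
  case False
  then obtain r where "CHAR('a) = 2 * r + 1" using CHAR_odd oddE by blast
  then have "CHAR('a) * m + m = 2 * ((r + 1) * m)" by (simp add: algebra_simps)
  then show ?thesis using False by (simp add: sum_Fp power_mult)
qed

definition err_F :: "nat \<Rightarrow> nat \<Rightarrow> nat \<Rightarrow> real" where
  "err_F p Q j = (if p dvd j then (-1) ^ (j + j div p) * real (Q choose (j div p)) else 0)"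

text \<open>If \<open>p \<nmid> j\<close> all sums are equally frequent.  If \<open>j = pm\<close>,
  the non-coset-closed sets contribute equally to both sums, so only the \<open>binom(Q,m)\<close>
  unions of \<open>m\<close> cosets matter, all of which have sum \<open>m \<Sigma> F\<^sub>p\<close>.\<close>
lemma count_sum_0_minus_1:
  "real (count_sum j (0::'a::{field,finite})) - real (count_sum j (1::'a))
     = err_F CHAR('a) (card (Fp_cosets :: 'a set set)) j"
proof (cases "CHAR('a) dvd j")
  case False
  then show ?thesis using count_sum_translate[OF False, of 0 1] by (simp add: err_F_def)
next
  case True
  then obtain m where j: "j = CHAR('a) * m" ..
  have m: "j div CHAR('a) = m" using j CHAR_gt_1[where 'a='a] by simp
  define R where "R \<sigma> = card {S\<in>{S. card S = j \<and> \<not> coset_closed S}. (\<Sum>x\<in>S. x) = (\<sigma>::'a)}" for \<sigma>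
  define P where "P \<sigma> = card {S::'a set. card S = j \<and> coset_closed S \<and> (\<Sum>x\<in>S. x) = \<sigma>}" for \<sigma>
  have split: "count_sum j \<sigma> = R \<sigma> + P \<sigma>" for \<sigma>
    unfolding count_sum_def R_def P_def
    by (subst card_Un_disjoint[symmetric]) (auto intro: arg_cong[where f = card])
  have "R 0 = R 1" unfolding R_def using card_not_coset_closed_shift[of "1::'a" j 0] by simp
  then have "real (count_sum j (0::'a)) - real (count_sum j (1::'a)) = real (P 0) - real (P 1)"
    unfolding split by simp
  also have "\<dots> = real (card (Fp_cosets :: 'a set set) choose m) * (-1) ^ (j + m)"
    using coset_closed_sign[of m, where 'a='a] j
    unfolding P_def card_coset_closed_with_sum[OF j, of 0] card_coset_closed_with_sum[OF j, of 1]
    by (auto split: if_splits)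
  finally show ?thesis using True m by (simp add: err_F_def)
qed

definition closed_form :: "nat \<Rightarrow> nat \<Rightarrow> nat \<Rightarrow> (nat \<Rightarrow> real) \<Rightarrow> nat \<Rightarrow> real" where
  "closed_form p q n E j = real p * real (n choose j) / real q + (real q - real p) / real q * E j"

text \<open>The whole field: \<open>N(j,s)\<close> takes one value on \<open>s \<noteq> 0\<close>, and knowing the total
  \<open>binom(q,j)\<close> and the difference \<open>N(j,0) - N(j,1)\<close> determines the \<open>p\<close> values on \<open>F\<^sub>p\<close>.\<close>
lemma count_Fp_sum_UNIV_closed_form:
  defines "p \<equiv> CHAR('a::{field,finite})" and "q \<equiv> card (UNIV :: 'a set)"
    and "Q \<equiv> card (Fp_cosets :: 'a set set)"
  shows "real (count_Fp_sum (UNIV :: 'a set) j) = closed_form p q q (err_F p Q) j"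
proof -
  let ?N0 = "real (count_sum j (0::'a))" and ?N1 = "real (count_sum j (1::'a))"
  have q: "q > 0" unfolding q_def by (simp add: finite_UNIV_card_ge_0)
  have p: "p > 0" unfolding p_def using CHAR_gt_1[where 'a='a] by simp
  have q1: "real (q - 1) = real q - 1" and p1: "real (p - 1) = real p - 1"
    using p q by (simp_all add: of_nat_diff)
  have "count_sum j (0::'a) + (q - 1) * count_sum j (1::'a) = q choose j"
    using sum_count_sum_UNIV[of j, where 'a='a] sum_count_sum_containing_0[of "UNIV :: 'a set" j]
    unfolding q_def by simp
  then have "real (count_sum j (0::'a) + (q - 1) * count_sum j (1::'a)) = real (q choose j)"
    by (rule arg_cong)
  then have total: "?N0 + (real q - 1) * ?N1 = real (q choose j)"
    unfolding of_nat_add of_nat_mult q1 .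
  have "count_Fp_sum (UNIV :: 'a set) j = count_sum j (0::'a) + (p - 1) * count_sum j (1::'a)"
    using count_Fp_sum_UNIV_eq_sum[of j, where 'a='a] sum_count_sum_containing_0[of Fp j]
    unfolding p_def by (simp add: card_Fp)
  then have Fp_part: "real (count_Fp_sum (UNIV :: 'a set) j) = ?N0 + (real p - 1) * ?N1"
    using p1 by simp
  have diff: "?N0 - ?N1 = err_F p Q j"
    unfolding p_def Q_def by (rule count_sum_0_minus_1)
  have N1: "?N1 = (real (q choose j) - err_F p Q j) / real q"
    using total diff q by (simp add: field_simps)
  have "real (count_Fp_sum (UNIV :: 'a set) j) = err_F p Q j + real p * ?N1"
    using Fp_part diff by (simp add: algebra_simps)
  also have "\<dots> = closed_form p q q (err_F p Q) j"
    unfolding N1 closed_form_def using q by (simp add: field_simps)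
  finally show ?thesis .
qed

lemma closed_form_Suc:
  assumes n: "n > 0" and E: "E' (Suc j) + E' j = E (Suc j)"
  shows "closed_form p q (n - 1) E' (Suc j) + closed_form p q (n - 1) E' j = closed_form p q n E (Suc j)"
proof -
  have "real (n choose Suc j) = real ((n - 1) choose Suc j) + real ((n - 1) choose j)"
    using n binomial_Suc_Suc[of "n - 1" j] by simp
  then have "real p * real (n choose Suc j) / real q
      = real p * real ((n - 1) choose Suc j) / real q + real p * real ((n - 1) choose j) / real q"
    by (simp add: distrib_left add_divide_distrib)
  then show ?thesis
    unfolding closed_form_def E[symmetric] distrib_left by linarith
qed

lemma count_Fp_sum_delete:
  assumes a: "a \<in> Fp" "a \<in> X" and n: "n > 0" and q: "q > 0"
    and X: "\<And>j. real (count_Fp_sum X j) = closed_form p q n E j"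
    and E'_Suc: "\<And>j. E' (Suc j) + E' j = E (Suc j)" and E'_0: "E' 0 = 1"
  shows "real (count_Fp_sum (X - {a}) j) = closed_form p q (n - 1) E' j"
proof (induction j)
  case 0
  show ?case using q E'_0 by (simp add: count_Fp_sum_0 closed_form_def field_simps)
next
  case (Suc j)
  have "real (count_Fp_sum (X - {a}) (Suc j))
      = real (count_Fp_sum X (Suc j)) - real (count_Fp_sum (X - {a}) j)"
    using count_Fp_sum_Suc[OF a, of j] by simp
  also have "\<dots> = closed_form p q n E (Suc j) - closed_form p q (n - 1) E' j"
    using X Suc.IH by simp
  also have "\<dots> = closed_form p q (n - 1) E' (Suc j)"
    using closed_form_Suc[where E' = E' and E = E, OF n E'_Suc, of p q j] by linarith
  finally show ?case .
qed

text \<open>Error terms after deleting \<open>0\<close> and then \<open>1\<close>: with the signed block binomials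
  \<open>alt(i) = (-1)^{\<lfloor>i/p\<rfloor>} binom(Q-1, \<lfloor>i/p\<rfloor>)\<close> they are \<open>(-1)^j alt(j)\<close> and
  \<open>(-1)^j \<Sigma>\<^sub>i\<^sub>\<le>\<^sub>j alt(i)\<close>; each solves Pascal's rule relative to the previous one.\<close>
definition alt_binom :: "nat \<Rightarrow> nat \<Rightarrow> nat \<Rightarrow> real" where
  "alt_binom p Q i = (-1) ^ (i div p) * real ((Q - 1) choose (i div p))"

definition err_F0 :: "nat \<Rightarrow> nat \<Rightarrow> nat \<Rightarrow> real" where
  "err_F0 p Q j = (-1) ^ j * alt_binom p Q j"

definition err_F01 :: "nat \<Rightarrow> nat \<Rightarrow> nat \<Rightarrow> real" where
  "err_F01 p Q j = (-1) ^ j * (\<Sum>i\<le>j. alt_binom p Q i)"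

text \<open>The Pascal relations; for \<open>err_F0\<close> they reduce to Pascal's rule for \<open>binom(Q, \<cdot>)\<close>
  at the multiples of \<open>p\<close>, and to a cancellation elsewhere.\<close>
lemma err_F0_Suc:
  assumes Q: "Q > 0"
  shows "err_F0 p Q (Suc j) + err_F0 p Q j = err_F p Q (Suc j)"
proof (cases "p dvd Suc j")
  case True
  let ?e = "j div p"
  have Suc_div: "Suc j div p = Suc ?e" using True by (simp add: div_Suc dvd_eq_mod_eq_0)
  have "real (Q choose Suc ?e) = real ((Q - 1) choose Suc ?e) + real ((Q - 1) choose ?e)"
    using Q binomial_Suc_Suc[of "Q - 1" ?e] by simp
  then show ?thesis
    using True unfolding err_F0_def alt_binom_def err_F_def Suc_div by (simp add: algebra_simps power_add)
next
  case False
  then have "Suc j div p = j div p" by (simp add: div_Suc dvd_eq_mod_eq_0)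
  then show ?thesis using False by (simp add: err_F0_def alt_binom_def err_F_def)
qed

lemma err_F01_Suc: "err_F01 p Q (Suc j) + err_F01 p Q j = err_F0 p Q (Suc j)"
  by (simp add: err_F01_def err_F0_def algebra_simps)

text \<open>For \<open>j = p(m+1) - 1\<close> the sum of \<open>alt\<close> runs over \<open>m+1\<close> complete blocks of
  length \<open>p\<close>; the alternating partial row sum gives \<open>binom(Q-2, m)\<close>.\<close>
lemma sum_alt_binom_blocks:
  assumes p: "p > 0"
  shows "(\<Sum>i<Suc m * p. alt_binom p Q i) = real p * (-1) ^ m * (real (Q - 1) - 1 gchoose m)"
proof -
  have block: "(\<Sum>i\<in>{b * p..<b * p + p}. alt_binom p Q i)
      = real p * ((real (Q - 1) gchoose b) * (-1) ^ b)" for b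
  proof -
    have "i div p = b" if "i \<in> {b * p..<b * p + p}" for i
      using that by (intro div_nat_eqI) (auto simp: algebra_simps)
    then have "(\<Sum>i\<in>{b * p..<b * p + p}. alt_binom p Q i)
        = (\<Sum>i\<in>{b * p..<b * p + p}. (-1) ^ b * real ((Q - 1) choose b))"
      by (intro sum.cong) (simp_all add: alt_binom_def)
    then show ?thesis by (simp add: binomial_gbinomial mult.commute)
  qed
  have "(\<Sum>i<Suc m * p. alt_binom p Q i) = (\<Sum>b<Suc m. \<Sum>i\<in>{b * p..<b * p + p}. alt_binom p Q i)"
    by (rule sum.nat_group[symmetric])
  also have "\<dots> = real p * (\<Sum>b\<le>m. (real (Q - 1) gchoose b) * (-1) ^ b)"
    unfolding block by (simp add: sum_distrib_left lessThan_Suc_atMost)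
  also have "\<dots> = real p * (-1) ^ m * (real (Q - 1) - 1 gchoose m)"
    by (simp add: gbinomial_sum_lower_neg)
  finally show ?thesis .
qed

lemma err_F01_block_end:
  assumes p: "p > 0" and Q: "Q > 0" and k: "Suc k = Suc m * p"
  shows "err_F01 p Q k = (-1) ^ (k + m) * real p * (real Q - 2 gchoose m)"
proof -
  have "err_F01 p Q k = (-1) ^ k * (\<Sum>i<Suc m * p. alt_binom p Q i)"
    by (simp add: err_F01_def lessThan_Suc_atMost[symmetric] k)
  also have "\<dots> = (-1) ^ k * (real p * (-1) ^ m * (real (Q - 1) - 1 gchoose m))"
    using sum_alt_binom_blocks[of p Q m] p by simp
  finally show ?thesis using Q by (simp add: of_nat_diff power_add)
qed

lemma count_Fp_sum_F01_closed_form: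
  defines "p \<equiv> CHAR('a::{field,finite})" and "q \<equiv> card (UNIV :: 'a set)"
    and "Q \<equiv> card (Fp_cosets :: 'a set set)"
  assumes q: "q > 2"
  shows "real (count_Fp_sum (UNIV - {0, 1} :: 'a set) j) = closed_form p q (q - 2) (err_F01 p Q) j"
proof -
  have Q: "Q > 0"
  proof (rule ccontr)
    assume "\<not> Q > 0"
    then show False using CHAR_mult_card_Fp_cosets[where 'a='a] q unfolding Q_def q_def by simp
  qed
  have F: "real (count_Fp_sum (UNIV :: 'a set) j) = closed_form p q q (err_F p Q) j" for j
    unfolding p_def q_def Q_def by (rule count_Fp_sum_UNIV_closed_form)
  have F0: "real (count_Fp_sum (UNIV - {0} :: 'a set) j) = closed_form p q (q - 1) (err_F0 p Q) j" for j
    by (rule count_Fp_sum_delete[OF Fp_0 _ _ _ F err_F0_Suc[OF Q]])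
      (use q in \<open>auto simp: err_F0_def alt_binom_def\<close>)
  have "real (count_Fp_sum (UNIV - {0} - {1} :: 'a set) j) = closed_form p q (q - 1 - 1) (err_F01 p Q) j"
    by (rule count_Fp_sum_delete[OF Fp_1 _ _ _ F0 err_F01_Suc])
      (use q in \<open>auto simp: err_F01_def alt_binom_def\<close>)
  moreover have "UNIV - {0} - {1} = (UNIV - {0, 1} :: 'a set)" by auto
  ultimately show ?thesis by (simp add: numeral_2_eq_2)
qed

theorem corollary3p4:
  fixes b :: "'a::{field,finite}" and k :: nat
  defines "q \<equiv> card (UNIV :: 'a set)" and "p \<equiv> semiring_char TYPE('a)"
  assumes "q > 2"
    and "1 \<le> k" and "k \<le> q - 2"
    and "k mod p = p - 1"
    and "b \<in> range (of_nat :: nat \<Rightarrow> 'a)"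
  shows "real (N_subsets k b (UNIV - {0, 1})) =
           real ((q - 2) choose k) / real q
         + (-1) ^ (k + k div p) * ((real q - real p) / real q)
             * ((real q / real p - 2) gchoose (k div p))"
proof -
  define Q where "Q = card (Fp_cosets :: 'a set set)"
  define m where "m = k div p"
  have p: "p > 1" unfolding p_def by (rule CHAR_gt_1)
  have pQ: "p * Q = q" unfolding p_def Q_def q_def by (rule CHAR_mult_card_Fp_cosets)
  have Q: "Q > 0" using pQ \<open>q > 2\<close> by (cases Q) auto
  have qp: "real q / real p = real Q" using p by (simp flip: pQ)
  have k: "Suc k = Suc m * p"
    using div_mult_mod_eq[of k p] \<open>k mod p = p - 1\<close> p unfolding m_def by (simp add: algebra_simps)
  have "count_Fp_sum (UNIV - {0, 1} :: 'a set) k = p * N_subsets k b (UNIV - {0, 1})"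
    unfolding p_def
  proof (rule count_Fp_sum_eq_CHAR_mult_N)
    show "CHAR('a) - card {0, 1::'a} < k mod CHAR('a)" using assms(6) p unfolding p_def by simp
    show "b \<in> Fp" using assms(7) unfolding Fp_def .
  qed simp
  then have "real p * real (N_subsets k b (UNIV - {0, 1})) = closed_form p q (q - 2) (err_F01 p Q) k"
    using count_Fp_sum_F01_closed_form[OF \<open>q > 2\<close>[unfolded q_def], of k]
    unfolding p_def q_def Q_def by simp
  moreover have "err_F01 p Q k = (-1) ^ (k + m) * real p * (real q / real p - 2 gchoose m)"
    using err_F01_block_end[OF _ Q k] p unfolding qp by simp
  ultimately have "real p * real (N_subsets k b (UNIV - {0, 1})) = real p * (real ((q - 2) choose k) / real q
      + (-1) ^ (k + m) * ((real q - real p) / real q) * (real q / real p - 2 gchoose m))"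
    unfolding closed_form_def by (simp add: algebra_simps)
  then show ?thesis using p unfolding m_def by simp
qed

end
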